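(* Consider two $K$-tier networks as described in the context, identical (same point processes $\Phi_k$, powers $P_k$, path loss exponent, per-user resources $\mathcal{O}_k$ and target rates $T_k$) except that the first has channel parameters $\{\Delta_k\},\{\Psi_k\}$ and the second $\{\Delta'_k\},\{\Psi'_k\}$. Suppose $\Psi_k\le\Psi'_k$ for all $k\in\mathcal{K}$. (a) Open access: if in addition $\Delta_k\ge\Delta'_k$ for all $k\in\mathcal{K}$, then the open access rate coverage of the first network is greater than or equal to that of the second. (b) Closed access with accessible tiers $\mathcal{B}\subset\mathcal{K}$: if in addition $\Delta_k\ge\Delta'_k$ for all $k\in\mathcal{B}$, then the closed access rate coverage of the first network is greater than or equal to that of the second.
   Context: Downlink $K$-tier cellular network with tiers indexed by $\mathcal{K}=\{1,\dots,K\}$. Tier-$k$ base stations (BSs) are located at the points of a stationary point process $\Phi_k\subset\mathbb{R}^2$ (not necessarily independent across tiers) and transmit with per-user power $P_k>0$; each tier has positive integer channel parameters $\Delta_k,\Psi_k$. $\alpha$ is the path loss exponent; a typical user is at the origin. Each BS at $x\in\Phi_k$ carries channel-power marks $h_{kx}\sim\Gamma(\Delta_k,1)$ (desired link) and $g_{kx}\sim\Gamma(\Psi_k,1)$ (interfering link), all mutually independent and independent of the point processes. $\mathrm{SIR}(x_k)=\dfrac{P_kh_{kx_k}\|x_k\|^{-\alpha}}{\sum_{j\in\mathcal{K}}\sum_{y\in\Phi_j\setminus\{x_k\}}P_jg_{jy}\|y\|^{-\alpha}}$ for $x_k\in\Phi_k$. Each user served by a tier-$k$ BS receives a fixed amount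 $\mathcal{O}_k>0$ of time-frequency resources, so its rate is $\mathcal{O}_k\log_2(1+\mathrm{SIR}(x_k))$; $T_k>0$ is the tier-$k$ target rate. The open access rate coverage is $\mathbb{P}\big(\bigcup_{k\in\mathcal{K}}\{\max_{x_k\in\Phi_k}\mathcal{O}_k\log_2(1+\mathrm{SIR}(x_k))>T_k\}\big)$; the closed access rate coverage with accessible tier set $\mathcal{B}\subset\mathcal{K}$ is the same with the union over $k\in\mathcal{B}$. $\Gamma(a,1)$ is the Gamma distribution with shape $a$, scale $1$. *)

theory Defs
  imports "HOL-Probability.Probability"
begin

(* A realization of the K-tier point process: for every tier k a number of
   points N k (possibly infinite) and an enumeration X k n (n < N k) of the
   tier-k base station locations in R^2. *)
type_synonym config = "(nat \<Rightarrow> enat) \<times> (nat \<Rightarrow> nat \<Rightarrow> real^2)"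

definition config_space :: "config measure" where
  "config_space = PiM UNIV (\<lambda>k. count_space UNIV) \<Otimes>\<^sub>M PiM UNIV (\<lambda>k. PiM UNIV (\<lambda>n. borel))"

definition pp_count :: "config \<Rightarrow> nat \<Rightarrow> (real^2) set \<Rightarrow> enat" where
  "pp_count c k B = (let S = {n. enat n < fst c k \<and> snd c k n \<in> B} in
                     if finite S then enat (card S) else \<infinity>)"

definition point_process :: "nat \<Rightarrow> config measure \<Rightarrow> bool" where
  "point_process K Q \<longleftrightarrow> prob_space Q \<and> sets Q = sets config_space \<and>
     (AE c in Q. \<forall>k\<in>{1..K}. inj_on (snd c k) {n. enat n < fst c k} \<and>
        (\<forall>B. bounded B \<longrightarrow> finite {n. enat n < fst c k \<and> snd c k n \<in> B}))"

definition stationary_pp :: "nat \<Rightarrow> config measure \<Rightarrow> bool" where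
  "stationary_pp K Q \<longleftrightarrow>
     (\<forall>(a::real^2) (m::nat) (ks::nat \<Rightarrow> nat) (Bs::nat \<Rightarrow> (real^2) set) (cs::nat \<Rightarrow> enat).
        (\<forall>i<m. ks i \<in> {1..K} \<and> Bs i \<in> sets borel \<and> bounded (Bs i)) \<longrightarrow>
        emeasure Q {c \<in> space Q. \<forall>i<m. pp_count c (ks i) ((\<lambda>x. x + a) ` Bs i) = cs i}
        = emeasure Q {c \<in> space Q. \<forall>i<m. pp_count c (ks i) (Bs i) = cs i})"

(* Gamma(a,1) distribution for positive integer shape a (= Erlang with shape a, rate 1) *)
definition gamma_measure :: "nat \<Rightarrow> real measure" where
  "gamma_measure a = density lborel (\<lambda>x. ennreal (erlang_density (a - 1) 1 x))"

(* i.i.d.-per-tier marks: the mark of the n-th point of tier k is coordinate (k,n) *)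
definition marks_law :: "(nat \<Rightarrow> nat) \<Rightarrow> (nat \<times> nat \<Rightarrow> real) measure" where
  "marks_law a = PiM UNIV (\<lambda>(k, n). gamma_measure (a k))"

(* joint law: point process, desired-link marks h, interfering-link marks g, all independent *)
definition network_measure ::
  "config measure \<Rightarrow> (nat \<Rightarrow> nat) \<Rightarrow> (nat \<Rightarrow> nat) \<Rightarrow> (config \<times> (nat \<times> nat \<Rightarrow> real) \<times> (nat \<times> nat \<Rightarrow> real)) measure" where
  "network_measure Q Delta Psi = Q \<Otimes>\<^sub>M (marks_law Delta \<Otimes>\<^sub>M marks_law Psi)"

(* SIR of the n-th tier-k BS; interference is summed over all other BSs of tiers 1..K
   (an ennreal, possibly infinite); ennreal division: s/0 = \<infinity> for s > 0, s/\<infinity> = 0 *)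
definition SIR :: "nat \<Rightarrow> real \<Rightarrow> (nat \<Rightarrow> real) \<Rightarrow> config \<Rightarrow> (nat \<times> nat \<Rightarrow> real)
                   \<Rightarrow> (nat \<times> nat \<Rightarrow> real) \<Rightarrow> nat \<Rightarrow> nat \<Rightarrow> ennreal" where
  "SIR K \<alpha> P c h g k n =
     ennreal (P k * h (k, n) * norm (snd c k n) powr (- \<alpha>)) /
     (\<Sum>j\<in>{1..K}. \<Sum>m. ennreal (if enat m < fst c j \<and> (j, m) \<noteq> (k, n)
                                   then P j * g (j, m) * norm (snd c j m) powr (- \<alpha>) else 0))"

definition rate_exceeds :: "real \<Rightarrow> real \<Rightarrow> ennreal \<Rightarrow> bool" where
  "rate_exceeds Ores T s \<longleftrightarrow> s = \<top> \<or> Ores * log 2 (1 + enn2real s) > T"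

definition rate_coverage :: "nat \<Rightarrow> real \<Rightarrow> (nat \<Rightarrow> real) \<Rightarrow> (nat \<Rightarrow> real) \<Rightarrow> (nat \<Rightarrow> real)
       \<Rightarrow> nat set \<Rightarrow> config measure \<Rightarrow> (nat \<Rightarrow> nat) \<Rightarrow> (nat \<Rightarrow> nat) \<Rightarrow> real" where
  "rate_coverage K \<alpha> P Ores T A Q Delta Psi =
     measure (network_measure Q Delta Psi)
       {\<omega> \<in> space (network_measure Q Delta Psi).
          \<exists>k\<in>A. \<exists>n. enat n < fst (fst \<omega>) k \<and>
             rate_exceeds (Ores k) (T k) (SIR K \<alpha> P (fst \<omega>) (fst (snd \<omega>)) (snd (snd \<omega>)) k n)}"

definition open_rate_coverage where
  "open_rate_coverage K \<alpha> P Ores T Q Delta Psi = rate_coverage K \<alpha> P Ores T {1..K} Q Delta Psi"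

definition closed_rate_coverage where
  "closed_rate_coverage K \<alpha> P Ores T B Q Delta Psi = rate_coverage K \<alpha> P Ores T B Q Delta Psi"

end

theory Submission
  imports Defs
begin

text \<open>
  The proof is a coupling argument. For \<open>a \<le> b\<close>, if \<open>X \<sim> \<Gamma>(a)\<close> and \<open>Y \<sim> \<Gamma>(b - a)\<close> are
  independent then \<open>X + Y \<sim> \<Gamma>(b)\<close> and \<open>X \<le> X + Y\<close>. Building all marks of both networks
  this way on one probability space together with the point process, every desired-link mark of
  the second network is at most the corresponding mark of the first (on the accessible tiers)
  and every interfering-link mark is at least the corresponding one. Each SIR of the second
  network is then dominated by that of the first realisation by realisation, so its coverage
  event is contained in that of the first, and both coverage probabilities are read off the
  common space.
\<close>

lemma distr_pair_measure_fst:
  assumes "prob_space M2" "sets N = sets M1"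
  shows "distr (M1 \<Otimes>\<^sub>M M2) N fst = M1"
proof -
  interpret M2: prob_space M2 by fact
  show ?thesis
    using M2.distr_pair_fst[of M1] distr_cong[OF refl assms(2)] by metis
qed

lemma distr_pair_measure_snd:
  assumes "prob_space M1" "prob_space M2" "sets N = sets M2"
  shows "distr (M1 \<Otimes>\<^sub>M M2) N snd = M2"
proof -
  interpret M1: prob_space M1 by fact
  interpret M2: prob_space M2 by fact
  interpret pair_sigma_finite M1 M2 ..
  have "distr (M1 \<Otimes>\<^sub>M M2) N snd
      = distr (distr (M2 \<Otimes>\<^sub>M M1) (M1 \<Otimes>\<^sub>M M2) (\<lambda>(x, y). (y, x))) N snd"
    by (simp add: distr_pair_swap[symmetric])
  also have "\<dots> = distr (M2 \<Otimes>\<^sub>M M1) N fst"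
    using assms(3)
    by (subst distr_distr) (auto intro!: distr_cong simp: measurable_cong_sets[OF refl assms(3)])
  also have "\<dots> = M2" by (rule distr_pair_measure_fst) (use assms in auto)
  finally show ?thesis .
qed

lemma AE_pair_measure_fstI:
  assumes "prob_space M2" "AE x in M1. P x"
  shows "AE z in M1 \<Otimes>\<^sub>M M2. P (fst z)"
proof (rule AE_distrD[of fst _ M1])
  show "AE x in distr (M1 \<Otimes>\<^sub>M M2) M1 fst. P x"
    using assms by (subst distr_pair_measure_fst) auto
qed simp

lemma AE_pair_measure_sndI:
  assumes "prob_space M1" "prob_space M2" "AE y in M2. P y"
  shows "AE z in M1 \<Otimes>\<^sub>M M2. P (snd z)"
proof (rule AE_distrD[of snd _ M2])
  show "AE y in distr (M1 \<Otimes>\<^sub>M M2) M2 snd. P y"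
    using assms by (subst distr_pair_measure_snd) auto
qed simp

lemma indep_var_fst_snd:
  assumes "prob_space M1" "prob_space M2" "sets N1 = sets M1" "sets N2 = sets M2"
  shows "prob_space.indep_var (M1 \<Otimes>\<^sub>M M2) N1 fst N2 snd"
proof -
  interpret prob_space "M1 \<Otimes>\<^sub>M M2" by (intro prob_space_pair assms)
  have "distr (M1 \<Otimes>\<^sub>M M2) (N1 \<Otimes>\<^sub>M N2) (\<lambda>x. (fst x, snd x))
      = distr (M1 \<Otimes>\<^sub>M M2) (M1 \<Otimes>\<^sub>M M2) (\<lambda>x. x)"
    by (intro distr_cong sets_pair_measure_cong assms) simp_all
  then show ?thesis
    unfolding indep_var_distribution_eq
      measurable_cong_sets[OF refl assms(3)] measurable_cong_sets[OF refl assms(4)]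
    by (simp add: distr_pair_measure_fst distr_pair_measure_snd assms)
qed

lemma distr_pair_measure_map_snd:
  assumes H: "H \<in> measurable X Y" and "sigma_finite_measure Y" and dH: "distr X Y H = Y"
  shows "distr (M \<Otimes>\<^sub>M X) (M \<Otimes>\<^sub>M Y) (\<lambda>(x, y). (x, H y)) = M \<Otimes>\<^sub>M Y"
  using pair_measure_distr[OF measurable_ident_sets[OF refl] H, of M] assms(2) by (simp add: dH distr_id)

lemma distr_PiM_componentwise:
  assumes R: "\<And>i. i \<in> I \<Longrightarrow> prob_space (R i)"
    and f: "\<And>i. i \<in> I \<Longrightarrow> f i \<in> measurable (R i) (N i)"
  shows "distr (PiM I R) (PiM I (\<lambda>i. distr (R i) (N i) (f i))) (\<lambda>\<omega>. \<lambda>i\<in>I. f i (\<omega> i))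
       = PiM I (\<lambda>i. distr (R i) (N i) (f i))"
    (is "distr ?R ?M ?t = ?M")
proof (rule measure_eqI_PiM_infinite[symmetric, OF refl])
  interpret prob_space ?M
    using R f by (intro prob_space_PiM prob_space.prob_space_distr) auto
  show "finite_measure ?M" by unfold_locales
  have t: "?t \<in> measurable ?R ?M"
    using f by (intro measurable_PiM_single') (auto simp: space_PiM PiE_iff intro: measurable_space)
  then show "sets (distr ?R ?M ?t) = sets ?M" by simp
  fix A J
  assume J: "finite J" "J \<subseteq> I" and A: "\<And>i. i \<in> J \<Longrightarrow> A i \<in> sets (distr (R i) (N i) (f i))"
  have "?M (prod_emb I (\<lambda>i. distr (R i) (N i) (f i)) J (Pi\<^sub>E J A))
      = (\<Prod>j\<in>J. distr (R j) (N j) (f j) (A j))"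
    using R f J A by (intro emeasure_PiM_emb prob_space.prob_space_distr) auto
  also have "\<dots> = (\<Prod>j\<in>J. R j (f j -` A j \<inter> space (R j)))"
    using f J A by (intro prod.cong refl emeasure_distr) auto
  also have "\<dots> = ?R (prod_emb I R J (\<Pi>\<^sub>E j\<in>J. f j -` A j \<inter> space (R j)))"
    using R f J A by (intro emeasure_PiM_emb[symmetric]) (auto intro!: measurable_sets)
  also have "prod_emb I R J (\<Pi>\<^sub>E j\<in>J. f j -` A j \<inter> space (R j))
      = ?t -` prod_emb I (\<lambda>i. distr (R i) (N i) (f i)) J (Pi\<^sub>E J A) \<inter> space ?R"
    using J measurable_space[OF f] by (auto simp: prod_emb_def space_PiM PiE_iff subset_eq)
  also have "?R \<dots> = distr ?R ?M ?t (prod_emb I (\<lambda>i. distr (R i) (N i) (f i)) J (Pi\<^sub>E J A))"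
    using t J A by (intro emeasure_distr[symmetric] sets_PiM_I) (auto simp: Pi_iff)
  finally show "?M (prod_emb I (\<lambda>i. distr (R i) (N i) (f i)) J (Pi\<^sub>E J A))
      = distr ?R ?M ?t (prod_emb I (\<lambda>i. distr (R i) (N i) (f i)) J (Pi\<^sub>E J A))" .
qed

lemma measurable_PiM_map:
  assumes "f \<in> measurable M N"
  shows "(\<lambda>\<omega> i. f (\<omega> i)) \<in> measurable (PiM UNIV (\<lambda>_. M)) (PiM UNIV (\<lambda>_. N))"
  using assms by (intro measurable_PiM_single') (auto simp: space_PiM intro: measurable_space)

lemma measure_le_of_coupling:
  assumes "prob_space C"
    and f: "f \<in> measurable C M" and f': "f' \<in> measurable C M'"
    and df: "distr C M f = M" and df': "distr C M' f' = M'" and sets_eq: "sets M' = sets M"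
    and AE: "AE x in C. P (f' x) \<longrightarrow> P (f x)"
  shows "measure M' {x \<in> space M'. P x} \<le> measure M {x \<in> space M. P x}"
proof -
  interpret prob_space C by fact
  define E where "E = {x \<in> space M. P x}"
  have space_eq: "space M' = space M"
    using sets_eq by (rule sets_eq_imp_space_eq)
  show ?thesis
  proof (cases "E \<in> sets M")
    case False
    then show ?thesis by (simp add: measure_notin_sets sets_eq space_eq flip: E_def)
  next
    case E: True
    have "measure M' E = measure C (f' -` E \<inter> space C)"
      using measure_distr[OF f', of E] E df' sets_eq by simp
    also have "\<dots> \<le> measure C (f -` E \<inter> space C)"
    proof (rule finite_measure_mono_AE[OF _ measurable_sets[OF f E]])
      show "AE x in C. x \<in> f' -` E \<inter> space C \<longrightarrow> x \<in> f -` E \<inter> space C"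
        using AE AE_space by eventually_elim (auto simp: E_def measurable_space[OF f])
    qed
    also have "\<dots> = measure M E"
      using measure_distr[OF f, of E] E df by simp
    finally show ?thesis by (simp add: space_eq E_def)
  qed
qed

lemma prob_space_gamma_measure: "prob_space (gamma_measure a)"
  unfolding gamma_measure_def by (rule prob_space_erlang_density) simp

lemma sets_gamma_measure [simp, measurable_cong]: "sets (gamma_measure a) = sets borel"
  unfolding gamma_measure_def by simp

lemma AE_gamma_measure_nonneg: "AE x in gamma_measure a. 0 \<le> x"
  unfolding gamma_measure_def
  by (subst AE_density) (auto simp: erlang_density_def split: if_splits)

lemma sets_gamma_pair [measurable_cong]:
  "sets (gamma_measure a \<Otimes>\<^sub>M gamma_measure b) = sets (borel \<Otimes>\<^sub>M borel)"
  by (intro sets_pair_measure_cong) simp_all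

lemma prob_space_gamma_pair: "prob_space (gamma_measure a \<Otimes>\<^sub>M gamma_measure b)"
  by (intro prob_space_pair prob_space_gamma_measure)

lemma gamma_measure_add:
  assumes "1 \<le> a" "1 \<le> b"
  shows "distr (gamma_measure a \<Otimes>\<^sub>M gamma_measure b) borel (\<lambda>z. fst z + snd z)
    = gamma_measure (a + b)"
proof -
  let ?M = "gamma_measure a \<Otimes>\<^sub>M gamma_measure b"
  interpret prob_space ?M by (rule prob_space_gamma_pair)
  note measurable_M = measurable_cong_sets[OF sets_gamma_pair refl]
  have "indep_var borel fst borel snd"
    by (intro indep_var_fst_snd prob_space_gamma_measure) simp_all
  moreover have "distributed ?M lborel fst (erlang_density (a - 1) 1)"
    using distr_pair_measure_fst[OF prob_space_gamma_measure, of lborel "gamma_measure a" b]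
    by (simp add: distributed_def gamma_measure_def measurable_M)
  moreover have "distributed ?M lborel snd (erlang_density (b - 1) 1)"
    using distr_pair_measure_snd[OF prob_space_gamma_measure prob_space_gamma_measure, of lborel b a]
    by (simp add: distributed_def gamma_measure_def measurable_M)
  ultimately have "distributed ?M lborel (\<lambda>x. fst x + snd x)
      (erlang_density (Suc (a - 1) + Suc (b - 1) - 1) 1)"
    by (intro sum_indep_erlang) simp_all
  then have "distr ?M lborel (\<lambda>x. fst x + snd x) = gamma_measure (a + b)"
    using assms by (simp add: distributed_def gamma_measure_def Suc_diff_le)
  then show ?thesis
    by (metis distr_cong sets_lborel)
qed

text \<open>
  Since \<open>gamma_measure 0\<close> is
  \<open>\<Gamma>(1)\<close> and not a point mass, the case \<open>a = b\<close> uses \<open>(X, X)\<close>; outside \<open>1 \<le> a \<le> b\<close> only the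
  marginals matter and the independent coupling is taken.
\<close>

definition gamma_coupling :: "nat \<Rightarrow> nat \<Rightarrow> (real \<times> real) measure" where
  "gamma_coupling a b =
     (if 1 \<le> a \<and> a \<le> b
      then distr (gamma_measure a \<Otimes>\<^sub>M gamma_measure (b - a)) (borel \<Otimes>\<^sub>M borel)
             (\<lambda>(x, y). (x, if a < b then x + y else x))
      else gamma_measure a \<Otimes>\<^sub>M gamma_measure b)"

lemma sets_gamma_coupling [measurable_cong]:
  "sets (gamma_coupling a b) = sets (borel \<Otimes>\<^sub>M borel)"
  by (simp add: gamma_coupling_def sets_gamma_pair)

lemma prob_space_gamma_coupling: "prob_space (gamma_coupling a b)"
  unfolding gamma_coupling_def
  by (auto intro!: prob_space.prob_space_distr prob_space_gamma_pair)

lemma distr_gamma_coupling: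
  assumes "1 \<le> a" "a \<le> b" "g \<in> measurable (borel \<Otimes>\<^sub>M borel) N"
  shows "distr (gamma_coupling a b) N g
    = distr (gamma_measure a \<Otimes>\<^sub>M gamma_measure (b - a)) N
        (\<lambda>(x, y). g (x, if a < b then x + y else x))"
proof -
  let ?f = "\<lambda>(x, y). (x, if a < b then x + y else x :: real)"
  have "?f \<in> measurable (gamma_measure a \<Otimes>\<^sub>M gamma_measure (b - a)) (borel \<Otimes>\<^sub>M borel)"
    by measurable
  then show ?thesis
    using assms unfolding gamma_coupling_def
    by (simp add: distr_distr comp_def split_beta')
qed

lemma distr_gamma_coupling_fst: "distr (gamma_coupling a b) borel fst = gamma_measure a"
proof (cases "1 \<le> a \<and> a \<le> b")
  case True
  then have "distr (gamma_coupling a b) borel fst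
      = distr (gamma_measure a \<Otimes>\<^sub>M gamma_measure (b - a)) borel fst"
    by (auto simp: distr_gamma_coupling intro!: distr_cong)
  then show ?thesis
    by (simp add: distr_pair_measure_fst prob_space_gamma_measure)
next
  case False
  then have "gamma_coupling a b = gamma_measure a \<Otimes>\<^sub>M gamma_measure b"
    unfolding gamma_coupling_def by (rule if_not_P)
  then show ?thesis by (simp add: distr_pair_measure_fst prob_space_gamma_measure)
qed

lemma distr_gamma_coupling_snd: "distr (gamma_coupling a b) borel snd = gamma_measure b"
proof -
  consider "1 \<le> a" "a < b" | "1 \<le> a" "a = b" | "\<not> (1 \<le> a \<and> a \<le> b)" by linarith
  then show ?thesis
  proof cases
    case 1
    then have "distr (gamma_coupling a b) borel snd
        = distr (gamma_measure a \<Otimes>\<^sub>M gamma_measure (b - a)) borel (\<lambda>z. fst z + snd z)"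
      by (auto simp: distr_gamma_coupling intro!: distr_cong)
    also have "\<dots> = gamma_measure b"
      using 1 gamma_measure_add[of a "b - a"] by simp
    finally show ?thesis .
  next
    case 2
    then have "distr (gamma_coupling a b) borel snd
        = distr (gamma_measure a \<Otimes>\<^sub>M gamma_measure 0) borel fst"
      by (auto simp: distr_gamma_coupling intro!: distr_cong)
    then show ?thesis
      using \<open>a = b\<close> by (simp add: distr_pair_measure_fst prob_space_gamma_measure)
  next
    case 3
    then have "gamma_coupling a b = gamma_measure a \<Otimes>\<^sub>M gamma_measure b"
      unfolding gamma_coupling_def by (rule if_not_P)
    then show ?thesis by (simp add: distr_pair_measure_snd prob_space_gamma_measure)
  qed
qed

lemma AE_gamma_coupling_le:
  assumes "1 \<le> a" "a \<le> b"
  shows "AE z in gamma_coupling a b. fst z \<le> snd z"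
proof -
  let ?M = "gamma_measure a \<Otimes>\<^sub>M gamma_measure (b - a)"
  let ?f = "\<lambda>(x, y). (x, if a < b then x + y else x :: real)"
  have f: "?f \<in> measurable ?M (borel \<Otimes>\<^sub>M borel)"
    by measurable
  have "AE z in ?M. 0 \<le> snd z"
    by (intro AE_pair_measure_sndI prob_space_gamma_measure AE_gamma_measure_nonneg)
  then have "AE z in ?M. fst (?f z) \<le> snd (?f z)"
    by (auto simp: split_beta elim!: eventually_mono)
  moreover have "{z \<in> space (borel \<Otimes>\<^sub>M borel). fst z \<le> (snd z :: real)} \<in> sets (borel \<Otimes>\<^sub>M borel)"
    by measurable
  ultimately show ?thesis
    using assms unfolding gamma_coupling_def by (simp add: AE_distr_iff[OF f])
qed

lemma prob_space_marks_law: "prob_space (marks_law a)"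
  unfolding marks_law_def
  by (intro prob_space_PiM) (auto split: prod.split intro: prob_space_gamma_measure)

lemma sets_marks_law [measurable_cong]: "sets (marks_law a) = sets (PiM UNIV (\<lambda>_. borel))"
  unfolding marks_law_def by (intro sets_PiM_cong) (auto split: prod.split)

definition marks_coupling ::
  "(nat \<Rightarrow> nat) \<Rightarrow> (nat \<Rightarrow> nat) \<Rightarrow> (nat \<times> nat \<Rightarrow> real \<times> real) measure" where
  "marks_coupling a b = PiM UNIV (\<lambda>i. gamma_coupling (a (fst i)) (b (fst i)))"

lemma prob_space_marks_coupling: "prob_space (marks_coupling a b)"
  unfolding marks_coupling_def by (intro prob_space_PiM prob_space_gamma_coupling)

lemma sets_marks_coupling [measurable_cong]:
  "sets (marks_coupling a b) = sets (PiM UNIV (\<lambda>_. borel \<Otimes>\<^sub>M borel))"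
  unfolding marks_coupling_def by (intro sets_PiM_cong) (simp_all add: sets_gamma_coupling)

lemma measurable_marks_coupling_fst:
  "(\<lambda>\<omega> i. fst (\<omega> i)) \<in> measurable (marks_coupling a b) (marks_law a)"
  unfolding measurable_cong_sets[OF sets_marks_coupling sets_marks_law]
  by (intro measurable_PiM_map) simp

lemma measurable_marks_coupling_snd:
  "(\<lambda>\<omega> i. snd (\<omega> i)) \<in> measurable (marks_coupling a b) (marks_law b)"
  unfolding measurable_cong_sets[OF sets_marks_coupling sets_marks_law]
  by (intro measurable_PiM_map) simp

lemma distr_marks_coupling:
  assumes "pr \<in> measurable (borel \<Otimes>\<^sub>M borel) borel"
    and "\<And>k. distr (gamma_coupling (a k) (b k)) borel pr = gamma_measure (c k)"
  shows "distr (marks_coupling a b) (marks_law c) (\<lambda>\<omega> i. pr (\<omega> i)) = marks_law c"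
proof -
  let ?D = "\<lambda>i. distr (gamma_coupling (a (fst i)) (b (fst i))) borel pr"
  have marginals: "?D = (\<lambda>(k, n). gamma_measure (c k))"
    using assms(2) by (auto simp: fun_eq_iff)
  have "distr (marks_coupling a b) (PiM UNIV ?D) (\<lambda>\<omega>. \<lambda>i\<in>UNIV. pr (\<omega> i)) = PiM UNIV ?D"
    unfolding marks_coupling_def using assms(1)
    by (intro distr_PiM_componentwise prob_space_gamma_coupling)
      (simp add: measurable_cong_sets[OF sets_gamma_coupling refl])
  then show ?thesis
    unfolding marginals marks_law_def restrict_UNIV .
qed

lemma distr_marks_coupling_fst:
  "distr (marks_coupling a b) (marks_law a) (\<lambda>\<omega> i. fst (\<omega> i)) = marks_law a"
  by (intro distr_marks_coupling distr_gamma_coupling_fst) simp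

lemma distr_marks_coupling_snd:
  "distr (marks_coupling a b) (marks_law b) (\<lambda>\<omega> i. snd (\<omega> i)) = marks_law b"
  by (intro distr_marks_coupling distr_gamma_coupling_snd) simp

lemma AE_marks_coupling_le:
  "AE \<omega> in marks_coupling a b.
     \<forall>k n. 1 \<le> a k \<and> a k \<le> b k \<longrightarrow> fst (\<omega> (k, n)) \<le> snd (\<omega> (k, n))"
proof -
  have "AE \<omega> in marks_coupling a b. fst (\<omega> (k, n)) \<le> snd (\<omega> (k, n))"
    if "1 \<le> a k" "a k \<le> b k" for k n
    unfolding marks_coupling_def
  proof (rule AE_PiM_component[where i="(k, n)" and P="\<lambda>z. fst z \<le> snd z"])
    show "AE z in gamma_coupling (a (fst (k, n))) (b (fst (k, n))). fst z \<le> snd z"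
      unfolding fst_conv by (rule AE_gamma_coupling_le[OF that])
  qed (simp_all add: prob_space_gamma_coupling)
  then show ?thesis
    by (simp add: AE_all_countable AE_impI)
qed

lemma sets_network_measure:
  "sets (network_measure Q a b) = sets (Q \<Otimes>\<^sub>M (PiM UNIV (\<lambda>_. borel) \<Otimes>\<^sub>M PiM UNIV (\<lambda>_. borel)))"
  unfolding network_measure_def by (intro sets_pair_measure_cong sets_marks_law refl)

lemma measurable_network_map:
  assumes F: "F \<in> measurable X (marks_law a)" and G: "G \<in> measurable Y (marks_law b)"
  shows "(\<lambda>(c, u, v). (c, F u, G v)) \<in> measurable (Q \<Otimes>\<^sub>M (X \<Otimes>\<^sub>M Y)) (network_measure Q a b)"
  unfolding network_measure_def using F G by measurable

lemma network_measure_eq_distr: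
  assumes F: "F \<in> measurable X (marks_law a)" and dF: "distr X (marks_law a) F = marks_law a"
    and G: "G \<in> measurable Y (marks_law b)" and dG: "distr Y (marks_law b) G = marks_law b"
  shows "distr (Q \<Otimes>\<^sub>M (X \<Otimes>\<^sub>M Y)) (network_measure Q a b) (\<lambda>(c, u, v). (c, F u, G v))
    = network_measure Q a b"
proof -
  let ?H = "\<lambda>(u, v). (F u, G v)"
  have "distr (X \<Otimes>\<^sub>M Y) (marks_law a \<Otimes>\<^sub>M marks_law b) ?H = marks_law a \<Otimes>\<^sub>M marks_law b"
    using pair_measure_distr[OF F G] dF dG by (simp add: prob_space_marks_law prob_space_imp_sigma_finite)
  moreover have "?H \<in> measurable (X \<Otimes>\<^sub>M Y) (marks_law a \<Otimes>\<^sub>M marks_law b)"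
    using F G by measurable
  ultimately have "distr (Q \<Otimes>\<^sub>M (X \<Otimes>\<^sub>M Y)) (network_measure Q a b) (\<lambda>(c, w). (c, ?H w))
      = network_measure Q a b"
    unfolding network_measure_def
    by (intro distr_pair_measure_map_snd prob_space_imp_sigma_finite prob_space_pair
        prob_space_marks_law)
  then show ?thesis
    by (simp add: split_beta')
qed

lemma ennreal_inverse_antimono: "(b::ennreal) \<le> b' \<Longrightarrow> inverse b' \<le> inverse b"
  unfolding less_eq_ennreal.rep_eq inverse_ennreal.rep_eq
  by (rule ereal_inverse_antimono[OF enn2ereal_nonneg])

lemma ennreal_divide_antimono: "(b::ennreal) \<le> b' \<Longrightarrow> a / b' \<le> a / b"
  unfolding divide_ennreal_def by (intro mult_left_mono ennreal_inverse_antimono) auto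

lemma SIR_mono:
  assumes k: "k \<in> {1..K}" and P_pos: "\<forall>j\<in>{1..K}. P j > 0"
    and h: "h' (k, n) \<le> h (k, n)"
    and g: "\<forall>j\<in>{1..K}. \<forall>m. g (j, m) \<le> g' (j, m)"
  shows "SIR K \<alpha> P c h' g' k n \<le> SIR K \<alpha> P c h g k n"
  unfolding SIR_def
proof (rule order_trans[OF divide_right_mono_ennreal ennreal_divide_antimono])
  show "ennreal (P k * h' (k, n) * norm (snd c k n) powr - \<alpha>)
    \<le> ennreal (P k * h (k, n) * norm (snd c k n) powr - \<alpha>)"
    using k P_pos h by (intro ennreal_leI mult_right_mono mult_left_mono) (auto simp: less_imp_le)
  show "(\<Sum>j\<in>{1..K}. \<Sum>m. ennreal (if enat m < fst c j \<and> (j, m) \<noteq> (k, n)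
                                   then P j * g (j, m) * norm (snd c j m) powr (- \<alpha>) else 0))
     \<le> (\<Sum>j\<in>{1..K}. \<Sum>m. ennreal (if enat m < fst c j \<and> (j, m) \<noteq> (k, n)
                                   then P j * g' (j, m) * norm (snd c j m) powr (- \<alpha>) else 0))"
    using P_pos g by (intro sum_mono suminf_le ennreal_leI) (auto intro!: mult_right_mono mult_left_mono)
qed

lemma rate_exceeds_mono:
  assumes "s \<le> s'" "0 < Or" "rate_exceeds Or T s"
  shows "rate_exceeds Or T s'"
proof (cases "s' = \<top>")
  case False
  then have "s \<noteq> \<top>" "enn2real s \<le> enn2real s'"
    using assms(1) by (auto simp: top_unique less_top intro: enn2real_mono)
  then have "Or * log 2 (1 + enn2real s) \<le> Or * log 2 (1 + enn2real s')"
    using assms(2) by (intro mult_left_mono) (auto simp: add_pos_nonneg)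
  then show ?thesis
    using assms(3) \<open>s \<noteq> \<top>\<close> by (simp add: rate_exceeds_def)
qed (simp add: rate_exceeds_def)

definition rate_covered ::
  "nat \<Rightarrow> real \<Rightarrow> (nat \<Rightarrow> real) \<Rightarrow> (nat \<Rightarrow> real) \<Rightarrow> (nat \<Rightarrow> real) \<Rightarrow> nat set
    \<Rightarrow> config \<times> (nat \<times> nat \<Rightarrow> real) \<times> (nat \<times> nat \<Rightarrow> real) \<Rightarrow> bool" where
  "rate_covered K \<alpha> P Ores T A = (\<lambda>(c, h, g).
     \<exists>k\<in>A. \<exists>n. enat n < fst c k \<and> rate_exceeds (Ores k) (T k) (SIR K \<alpha> P c h g k n))"

lemma rate_coverage_eq_measure:
  "rate_coverage K \<alpha> P Ores T A Q Delta Psi =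
     measure (network_measure Q Delta Psi)
       {\<omega> \<in> space (network_measure Q Delta Psi). rate_covered K \<alpha> P Ores T A \<omega>}"
  by (simp add: rate_coverage_def rate_covered_def split_beta)

lemma rate_covered_mono:
  assumes P_pos: "\<forall>k\<in>{1..K}. 0 < P k" and O_pos: "\<forall>k\<in>{1..K}. 0 < Ores k"
    and A: "A \<subseteq> {1..K}"
    and h: "\<forall>k\<in>A. \<forall>n. h' (k, n) \<le> h (k, n)"
    and g: "\<forall>j\<in>{1..K}. \<forall>m. g (j, m) \<le> g' (j, m)"
    and covered: "rate_covered K \<alpha> P Ores T A (c, h', g')"
  shows "rate_covered K \<alpha> P Ores T A (c, h, g)"
proof -
  from covered obtain k n where k: "k \<in> A" "enat n < fst c k"
    and rate: "rate_exceeds (Ores k) (T k) (SIR K \<alpha> P c h' g' k n)"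
    by (auto simp: rate_covered_def)
  have "SIR K \<alpha> P c h' g' k n \<le> SIR K \<alpha> P c h g k n"
    using k A h g by (intro SIR_mono P_pos) auto
  then have "rate_exceeds (Ores k) (T k) (SIR K \<alpha> P c h g k n)"
    using k A O_pos by (intro rate_exceeds_mono[OF _ _ rate]) auto
  with k show ?thesis
    by (auto simp: rate_covered_def)
qed

text \<open>
  A point \<open>(c, u, v)\<close> of the coupling space carries desired-link mark pairs \<open>u i = (h' i, h i)\<close>
  and interfering-link mark pairs \<open>v i = (g i, g' i)\<close>; the weaker network reads off \<open>(h', g')\<close>,
  the stronger one \<open>(h, g)\<close>.
\<close>

definition weaker_network ::
  "config \<times> (nat \<times> nat \<Rightarrow> real \<times> real) \<times> (nat \<times> nat \<Rightarrow> real \<times> real)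
    \<Rightarrow> config \<times> (nat \<times> nat \<Rightarrow> real) \<times> (nat \<times> nat \<Rightarrow> real)" where
  "weaker_network = (\<lambda>(c, u, v). (c, \<lambda>i. fst (u i), \<lambda>i. snd (v i)))"

definition stronger_network ::
  "config \<times> (nat \<times> nat \<Rightarrow> real \<times> real) \<times> (nat \<times> nat \<Rightarrow> real \<times> real)
    \<Rightarrow> config \<times> (nat \<times> nat \<Rightarrow> real) \<times> (nat \<times> nat \<Rightarrow> real)" where
  "stronger_network = (\<lambda>(c, u, v). (c, \<lambda>i. snd (u i), \<lambda>i. fst (v i)))"

lemma measurable_weaker_network:
  "weaker_network
    \<in> measurable (Q \<Otimes>\<^sub>M (marks_coupling a' a \<Otimes>\<^sub>M marks_coupling b b')) (network_measure Q a' b')"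
  unfolding weaker_network_def
  by (intro measurable_network_map measurable_marks_coupling_fst measurable_marks_coupling_snd)

lemma measurable_stronger_network:
  "stronger_network
    \<in> measurable (Q \<Otimes>\<^sub>M (marks_coupling a' a \<Otimes>\<^sub>M marks_coupling b b')) (network_measure Q a b)"
  unfolding stronger_network_def
  by (intro measurable_network_map measurable_marks_coupling_fst measurable_marks_coupling_snd)

lemma distr_weaker_network:
  "distr (Q \<Otimes>\<^sub>M (marks_coupling a' a \<Otimes>\<^sub>M marks_coupling b b')) (network_measure Q a' b')
     weaker_network = network_measure Q a' b'"
  unfolding weaker_network_def
  by (intro network_measure_eq_distr distr_marks_coupling_fst distr_marks_coupling_snd
      measurable_marks_coupling_fst measurable_marks_coupling_snd)

lemma distr_stronger_network:
  "distr (Q \<Otimes>\<^sub>M (marks_coupling a' a \<Otimes>\<^sub>M marks_coupling b b')) (network_measure Q a b)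
     stronger_network = network_measure Q a b"
  unfolding stronger_network_def
  by (intro network_measure_eq_distr distr_marks_coupling_fst distr_marks_coupling_snd
      measurable_marks_coupling_fst measurable_marks_coupling_snd)

lemma AE_rate_covered_weaker_imp_stronger:
  assumes Q: "prob_space Q"
    and P_pos: "\<forall>k\<in>{1..K}. 0 < P k" and O_pos: "\<forall>k\<in>{1..K}. 0 < Ores k"
    and A: "A \<subseteq> {1..K}"
    and Delta: "\<forall>k\<in>A. 1 \<le> Delta' k \<and> Delta' k \<le> Delta k"
    and Psi: "\<forall>k\<in>{1..K}. 1 \<le> Psi k \<and> Psi k \<le> Psi' k"
  shows "AE x in Q \<Otimes>\<^sub>M (marks_coupling Delta' Delta \<Otimes>\<^sub>M marks_coupling Psi Psi').
    rate_covered K \<alpha> P Ores T A (weaker_network x) \<longrightarrow>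
    rate_covered K \<alpha> P Ores T A (stronger_network x)"
proof -
  have "AE x in Q \<Otimes>\<^sub>M (marks_coupling Delta' Delta \<Otimes>\<^sub>M marks_coupling Psi Psi').
      (\<forall>k n. 1 \<le> Delta' k \<and> Delta' k \<le> Delta k \<longrightarrow>
         fst (fst (snd x) (k, n)) \<le> snd (fst (snd x) (k, n))) \<and>
      (\<forall>k n. 1 \<le> Psi k \<and> Psi k \<le> Psi' k \<longrightarrow>
         fst (snd (snd x) (k, n)) \<le> snd (snd (snd x) (k, n)))"
    (is "AE x in _. ?ordered x")
    using AE_marks_coupling_le
    by (intro AE_pair_measure_sndI Q prob_space_pair prob_space_marks_coupling eventually_conj
        AE_pair_measure_fstI AE_pair_measure_sndI)
  then show ?thesis
  proof (rule eventually_mono, intro impI)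
    fix x
    assume le: "?ordered x" and covered: "rate_covered K \<alpha> P Ores T A (weaker_network x)"
    obtain c u v where x: "x = (c, u, v)"
      using prod_cases3 by blast
    have h: "\<forall>k\<in>A. \<forall>n. fst (u (k, n)) \<le> snd (u (k, n))"
      using le Delta by (simp add: x)
    have g: "\<forall>k\<in>{1..K}. \<forall>n. fst (v (k, n)) \<le> snd (v (k, n))"
      using le Psi by (simp add: x)
    show "rate_covered K \<alpha> P Ores T A (stronger_network x)"
      using covered unfolding weaker_network_def stronger_network_def x prod.case
      by (rule rate_covered_mono[OF P_pos O_pos A h g, rotated -1])
  qed
qed

lemma rate_coverage_mono:
  assumes Q: "prob_space Q"
    and P_pos: "\<forall>k\<in>{1..K}. 0 < P k" and O_pos: "\<forall>k\<in>{1..K}. 0 < Ores k"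
    and A: "A \<subseteq> {1..K}"
    and Delta: "\<forall>k\<in>A. 1 \<le> Delta' k \<and> Delta' k \<le> Delta k"
    and Psi: "\<forall>k\<in>{1..K}. 1 \<le> Psi k \<and> Psi k \<le> Psi' k"
  shows "rate_coverage K \<alpha> P Ores T A Q Delta' Psi' \<le> rate_coverage K \<alpha> P Ores T A Q Delta Psi"
  unfolding rate_coverage_eq_measure
proof (rule measure_le_of_coupling[OF _ measurable_stronger_network measurable_weaker_network
      distr_stronger_network distr_weaker_network])
  show "prob_space (Q \<Otimes>\<^sub>M (marks_coupling Delta' Delta \<Otimes>\<^sub>M marks_coupling Psi Psi'))"
    by (intro prob_space_pair Q prob_space_marks_coupling)
  show "sets (network_measure Q Delta' Psi') = sets (network_measure Q Delta Psi)"
    by (simp add: sets_network_measure)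
qed (rule AE_rate_covered_weaker_imp_stronger[OF assms])

theorem theorem2:
  fixes K :: nat and \<alpha> :: real
    and P Ores T :: "nat \<Rightarrow> real"
    and Delta Psi Delta' Psi' :: "nat \<Rightarrow> nat"
    and Q :: "config measure"
  assumes pp: "point_process K Q" and stat: "stationary_pp K Q"
    and P_pos: "\<forall>k\<in>{1..K}. P k > 0"
    and O_pos: "\<forall>k\<in>{1..K}. Ores k > 0"
    and T_pos: "\<forall>k\<in>{1..K}. T k > 0"
    and par_pos: "\<forall>k\<in>{1..K}. Delta k \<ge> 1 \<and> Psi k \<ge> 1 \<and> Delta' k \<ge> 1 \<and> Psi' k \<ge> 1"
    and Psi_le: "\<forall>k\<in>{1..K}. Psi k \<le> Psi' k"
  shows "((\<forall>k\<in>{1..K}. Delta' k \<le> Delta k) \<longrightarrow>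
           open_rate_coverage K \<alpha> P Ores T Q Delta' Psi' \<le> open_rate_coverage K \<alpha> P Ores T Q Delta Psi) \<and>
         (\<forall>B. B \<subseteq> {1..K} \<longrightarrow> (\<forall>k\<in>B. Delta' k \<le> Delta k) \<longrightarrow>
           closed_rate_coverage K \<alpha> P Ores T B Q Delta' Psi' \<le> closed_rate_coverage K \<alpha> P Ores T B Q Delta Psi)"
proof -
  have Q: "prob_space Q"
    using pp by (simp add: point_process_def)
  have Psi: "\<forall>k\<in>{1..K}. 1 \<le> Psi k \<and> Psi k \<le> Psi' k"
    using par_pos Psi_le by blast
  have "rate_coverage K \<alpha> P Ores T B Q Delta' Psi' \<le> rate_coverage K \<alpha> P Ores T B Q Delta Psi"
    if "B \<subseteq> {1..K}" "\<forall>k\<in>B. Delta' k \<le> Delta k" for B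
    using that par_pos by (intro rate_coverage_mono[OF Q P_pos O_pos _ _ Psi]) auto
  then show ?thesis
    by (simp add: open_rate_coverage_def closed_rate_coverage_def)
qed

end
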